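(* Let $U$ be an $n\times n$ unitary matrix and let $b$ be a positive integer smaller than $n/2$. Let $I=\{(j,k): j,k=1,\dots,n,\ |j-k|\le b\text{ or }n-|j-k|\le b\}$ and let $U^{(band)}$ be the $n\times n$ matrix with entries $U^{(band)}_{jk}=U_{jk}$ for $(j,k)\in I$ and $U^{(band)}_{jk}=0$ otherwise. Then there exist positive constants $C_1,C_2$, independent of $n$ and $b$, such that $$\|U^{(band)}\|\le C_1\ln b+C_2.$$
   Context: $\|\cdot\|$ denotes the operator norm. *)

theory Defs
  imports Complex_Main
begin

(* An n x n complex matrix is represented as a function nat => nat => complex;
   only the entries with indices in {0..<n} are relevant (indices shifted from 1..n to 0..n-1). *)

definition unitary_mat :: "nat \<Rightarrow> (nat \<Rightarrow> nat \<Rightarrow> complex) \<Rightarrow> bool" where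
  "unitary_mat n U \<longleftrightarrow>
     (\<forall>j<n. \<forall>k<n. (\<Sum>i<n. cnj (U i j) * U i k) = (if j = k then 1 else 0)) \<and>
     (\<forall>j<n. \<forall>k<n. (\<Sum>i<n. U j i * cnj (U k i)) = (if j = k then 1 else 0))"

definition op_norm :: "nat \<Rightarrow> (nat \<Rightarrow> nat \<Rightarrow> complex) \<Rightarrow> real" where
  "op_norm n A = Sup {sqrt (\<Sum>j<n. (cmod (\<Sum>k<n. A j k * x k))\<^sup>2) | x :: nat \<Rightarrow> complex.
                        (\<Sum>k<n. (cmod (x k))\<^sup>2) \<le> 1}"

definition band :: "nat \<Rightarrow> nat \<Rightarrow> (nat \<Rightarrow> nat \<Rightarrow> complex) \<Rightarrow> (nat \<Rightarrow> nat \<Rightarrow> complex)" where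
  "band n b U = (\<lambda>j k. if \<bar>int j - int k\<bar> \<le> int b \<or> int n - \<bar>int j - int k\<bar> \<le> int b
                        then U j k else 0)"

end

theory Submission
  imports Defs "HOL-Analysis.L2_Norm" "HOL-Analysis.Complex_Transcendental"
begin

text \<open>The periodic band mask \<open>M j k = [j - k \<in> {-b..b} mod n]\<close> is circulant, hence a combination
\<open>M j k = (\<Sum>t<n. c t * e(t j) * e(-t k))\<close> of rank-one matrices with unimodular entries,
\<open>e(x) = cis (2 \<pi> x / n)\<close>, whose coefficients \<open>c t\<close> form a Dirichlet kernel. Multiplying \<open>U\<close>
entrywise by \<open>e(t j) e(-t k)\<close> conjugates it by diagonal unitaries, so
\<open>\<parallel>band n b U\<parallel> \<le> (\<Sum>t. \<bar>c t\<bar>)\<close>. The Dirichlet kernel bound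
\<open>\<bar>c t\<bar> \<le> min ((2b+1)/n) (1/t + 1/(n-t))\<close> makes this sum at most \<open>2 ln b + O(1)\<close>.\<close>

definition cis_frac :: "nat \<Rightarrow> real \<Rightarrow> complex" where
  "cis_frac n x = cis (2 * pi * x / real n)"

lemma cis_frac_mult: "cis_frac n x * cis_frac n y = cis_frac n (x + y)"
  by (simp add: cis_frac_def cis_mult add_divide_distrib distrib_left)

lemma norm_cis_frac [simp]: "cmod (cis_frac n x) = 1"
  by (simp add: cis_frac_def)

lemma cis_frac_power: "cis_frac n x ^ t = cis_frac n (real t * x)"
  unfolding cis_frac_def Complex.DeMoivre by (simp add: mult_ac)

lemma cis_frac_eq_1_iff:
  assumes "n > 0"
  shows "cis_frac n (of_int m) = 1 \<longleftrightarrow> int n dvd m"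
proof
  assume "cis_frac n (of_int m) = 1"
  then have "cos (2 * pi * of_int m / real n) = 1"
    unfolding cis_frac_def by (metis cis.sel(1) one_complex.sel(1))
  then obtain q :: int where "2 * pi * of_int m / real n = of_int q * 2 * pi"
    using cos_one_2pi_int by blast
  then have "real_of_int m = of_int (q * int n)"
    using assms by (simp add: field_simps)
  then show "int n dvd m"
    by (metis of_int_eq_iff dvd_triv_right)
next
  assume "int n dvd m"
  then obtain q where "m = int n * q" by blast
  then show "cis_frac n (of_int m) = 1"
    using assms cis_multiple_2pi[of "of_int q"] by (simp add: cis_frac_def mult.assoc)
qed

lemma sum_cis_frac_multiples:
  assumes "n > 0"
  shows "(\<Sum>t<n. cis_frac n (real t * of_int m)) = (if int n dvd m then of_nat n else 0)"
proof -
  let ?z = "cis_frac n (of_int m)"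
  have sum_eq: "(\<Sum>t<n. cis_frac n (real t * of_int m)) = (\<Sum>t<n. ?z ^ t)"
    by (simp add: cis_frac_power)
  have "?z ^ n = 1"
    using assms cis_frac_eq_1_iff[OF assms, of "int n * m"] by (simp add: cis_frac_power)
  then show ?thesis
    using assms cis_frac_eq_1_iff[OF assms, of m] geometric_sum[of ?z n] sum_eq by auto
qed

lemma norm_geometric_sum_le:
  fixes w :: complex
  assumes "cmod w = 1" "w \<noteq> 1"
  shows "cmod (\<Sum>i<m. w ^ i) \<le> 2 / cmod (w - 1)"
proof -
  have "cmod (w ^ m - 1) \<le> cmod (w ^ m) + cmod (1::complex)"
    by (rule norm_triangle_ineq4)
  also have "\<dots> = 2"
    using assms by (simp add: norm_power)
  finally show ?thesis
    using assms by (simp add: geometric_sum norm_divide divide_right_mono)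
qed

lemma norm_cis_minus_1: "cmod (cis \<phi> - 1) = 2 * \<bar>sin (\<phi> / 2)\<bar>"
proof -
  have "cis \<phi> - 1 = cis (\<phi> / 2) * (cis (\<phi> / 2) - cis (- (\<phi> / 2)))"
    by (simp add: right_diff_distrib cis_mult)
  also have "cis (\<phi> / 2) - cis (- (\<phi> / 2)) = \<i> * complex_of_real (2 * sin (\<phi> / 2))"
    by (simp add: complex_eq_iff)
  finally show ?thesis
    by (simp add: norm_mult)
qed

lemma sin_ge_third:
  fixes x :: real
  assumes "0 \<le> x" "x \<le> 2"
  shows "x / 3 \<le> sin x"
proof -
  have "\<bar>sin x - (\<Sum>m<3. sin_coeff m * x ^ m)\<bar> \<le> inverse (fact 3) * \<bar>x\<bar> ^ 3"
    by (rule Maclaurin_sin_bound)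
  moreover have "(\<Sum>m<3. sin_coeff m * x ^ m) = x"
    by (simp add: sin_coeff_def numeral_3_eq_3)
  ultimately have "x - x ^ 3 / 6 \<le> sin x"
    using assms by (simp add: fact_numeral abs_if split: if_splits)
  moreover have "x ^ 3 \<le> 4 * x"
  proof -
    have "x * x ^ 2 \<le> x * 2 ^ 2"
      using assms by (intro mult_left_mono power_mono) auto
    then show ?thesis
      by (simp add: power3_eq_cube power2_eq_square mult_ac)
  qed
  ultimately show ?thesis
    by simp
qed

lemma sin_pi_frac_ge:
  assumes "2 * s \<le> n" "n > 0"
  shows "real s / real n \<le> sin (pi * real s / real n)"
proof -
  have "pi * real s / real n \<le> pi / 2"
    using assms by (simp add: field_simps)
  then have le2: "pi * real s / real n \<le> 2"
    using pi_less_4 by linarith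
  have "3 * real s \<le> pi * real s"
    using pi_gt3 by (intro mult_right_mono) auto
  then have "real s / real n \<le> (pi * real s / real n) / 3"
    using assms by (simp add: field_simps)
  also have "\<dots> \<le> sin (pi * real s / real n)"
    using le2 by (intro sin_ge_third) auto
  finally show ?thesis .
qed

text \<open>The bound \<open>sin x \<ge> x/\<pi>\<close> on \<open>[0, \<pi>/2]\<close> is applied to whichever of \<open>t\<close>, \<open>n - t\<close> is at
most \<open>n/2\<close>.\<close>

lemma inverse_sin_pi_frac_le:
  assumes "0 < t" "t < n"
  shows "1 / (real n * sin (pi * real t / real n)) \<le> 1 / real t + 1 / real (n - t)"
proof (cases "2 * t \<le> n")
  case True
  with assms have "real t \<le> real n * sin (pi * real t / real n)"
    using sin_pi_frac_ge[of t n] by (simp add: field_simps)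
  moreover have "0 < real t" "0 \<le> 1 / real (n - t)"
    using assms by auto
  ultimately show ?thesis
    by (smt (verit) frac_le one_le_numeral)
next
  case False
  have "sin (pi * real t / real n) = sin (pi - pi * real t / real n)"
    by simp
  also have "pi - pi * real t / real n = pi * real (n - t) / real n"
    using assms by (simp add: of_nat_diff field_simps)
  finally have "real (n - t) \<le> real n * sin (pi * real t / real n)"
    using False assms sin_pi_frac_ge[of "n - t" n] by (simp add: field_simps)
  moreover have "0 < real (n - t)" "0 \<le> 1 / real t"
    using assms by auto
  ultimately show ?thesis
    by (smt (verit) frac_le one_le_numeral)
qed

lemma int_dvd_abs_less_double:
  fixes m :: int
  assumes "int n dvd m" "\<bar>m\<bar> < 2 * int n"
  shows "m = 0 \<or> m = int n \<or> m = - int n"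
proof -
  obtain q where q: "m = int n * q"
    using assms(1) by blast
  have "\<bar>q\<bar> < 2"
  proof (rule ccontr)
    assume "\<not> \<bar>q\<bar> < 2"
    then have "int n * 2 \<le> int n * \<bar>q\<bar>"
      by (intro mult_left_mono) auto
    then show False
      using assms(2) by (simp add: q abs_mult)
  qed
  then have "q = 0 \<or> q = 1 \<or> q = -1"
    by auto
  then show ?thesis
    using q by auto
qed

text \<open>Exactly one shift \<open>i - b \<in> {-b..b}\<close> is congruent to \<open>j - k\<close> modulo \<open>n\<close> inside the band, and none
outside; since \<open>2b < n\<close>, the only multiples of \<open>n\<close> in range are \<open>0\<close> and \<open>\<plusminus>n\<close>.\<close>

lemma sum_band_shift_indicator:
  assumes n: "2 * b < n" and j: "j < n" and k: "k < n"
  shows "(\<Sum>i<2*b+1. if int n dvd (int j - int k - int i + int b) then 1::complex else 0)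
     = (if \<bar>int j - int k\<bar> \<le> int b \<or> int n - \<bar>int j - int k\<bar> \<le> int b then 1 else 0)"
proof -
  define D where "D = int j - int k"
  have D: "\<bar>D\<bar> < int n"
    using j k by (auto simp: D_def)
  have dvd_iff: "int n dvd (D - int i + int b) \<longleftrightarrow>
      D - int i + int b = 0 \<or> D - int i + int b = int n \<or> D - int i + int b = - int n"
    if "i < 2*b+1" for i
  proof
    assume "int n dvd (D - int i + int b)"
    moreover have "\<bar>D - int i + int b\<bar> < 2 * int n"
      using that D n by auto
    ultimately show "D - int i + int b = 0 \<or> D - int i + int b = int n \<or> D - int i + int b = - int n"
      by (rule int_dvd_abs_less_double)
  qed auto
  show ?thesis
  proof (cases "\<bar>D\<bar> \<le> int b \<or> int n - \<bar>D\<bar> \<le> int b")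
    case True
    define d where "d = (if \<bar>D\<bar> \<le> int b then D else if D \<ge> 0 then D - int n else D + int n)"
    have d: "- int b \<le> d \<and> d \<le> int b"
      using True D n by (auto simp: d_def)
    define i0 where "i0 = nat (d + int b)"
    have "int n dvd (D - int i + int b) \<longleftrightarrow> i = i0" if "i < 2*b+1" for i
      unfolding dvd_iff[OF that] using True D n that d unfolding i0_def d_def
      by (auto split: if_splits)
    then have "(\<Sum>i<2*b+1. if int n dvd (D - int i + int b) then 1::complex else 0)
        = (\<Sum>i<2*b+1. if i = i0 then 1 else 0)"
      by (intro sum.cong) auto
    also have "\<dots> = 1"
      using d by (simp add: i0_def nat_less_iff del: sum.lessThan_Suc)
    finally show ?thesis
      using True by (simp add: D_def)
  next
    case False
    then have "\<not> int n dvd (D - int i + int b)" if "i < 2*b+1" for i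
      unfolding dvd_iff[OF that] using D n that by auto
    then show ?thesis
      using False by (simp add: D_def)
  qed
qed

definition band_coeff :: "nat \<Rightarrow> nat \<Rightarrow> nat \<Rightarrow> complex" where
  "band_coeff n b t = (\<Sum>i<2*b+1. cis_frac n (- (real t * (real i - real b)))) / of_nat n"

lemma band_indicator_expansion:
  assumes n: "2 * b < n" and j: "j < n" and k: "k < n"
  shows "(\<Sum>t<n. band_coeff n b t * cis_frac n (real t * real j) * cis_frac n (- (real t * real k)))
     = (if \<bar>int j - int k\<bar> \<le> int b \<or> int n - \<bar>int j - int k\<bar> \<le> int b then 1 else 0)"
proof -
  have n0: "n > 0"
    using n by auto
  have phase: "cis_frac n (- (real t * (real i - real b))) * cis_frac n (real t * real j)
      * cis_frac n (- (real t * real k)) = cis_frac n (real t * of_int (int j - int k - int i + int b))"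
    for t i
    by (simp add: cis_frac_mult algebra_simps)
  have "(\<Sum>t<n. band_coeff n b t * cis_frac n (real t * real j) * cis_frac n (- (real t * real k)))
     = (\<Sum>t<n. \<Sum>i<2*b+1. cis_frac n (real t * of_int (int j - int k - int i + int b))) / of_nat n"
    by (simp add: band_coeff_def sum_divide_distrib sum_distrib_right phase del: sum.lessThan_Suc)
  also have "\<dots> = (\<Sum>i<2*b+1. \<Sum>t<n. cis_frac n (real t * of_int (int j - int k - int i + int b))) / of_nat n"
    by (simp only: sum.swap[of _ "{..<n}"])
  also have "\<dots> = (\<Sum>i<2*b+1. if int n dvd (int j - int k - int i + int b) then of_nat n else 0) / of_nat n"
    by (intro arg_cong[where f="\<lambda>x. x / of_nat n"] sum.cong refl sum_cis_frac_multiples[OF n0])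
  also have "\<dots> = (\<Sum>i<2*b+1. if int n dvd (int j - int k - int i + int b) then 1::complex else 0)"
    unfolding sum_divide_distrib using n0 by (intro sum.cong refl) auto
  finally show ?thesis
    using sum_band_shift_indicator[OF n j k] by simp
qed

lemma norm_band_coeff_le_width:
  assumes "n > 0"
  shows "cmod (band_coeff n b t) \<le> (2 * real b + 1) / real n"
proof -
  have "cmod (\<Sum>i<2*b+1. cis_frac n (- (real t * (real i - real b))))
      \<le> (\<Sum>i<2*b+1. cmod (cis_frac n (- (real t * (real i - real b)))))"
    by (rule norm_sum)
  also have "\<dots> = 2 * real b + 1"
    by simp
  finally show ?thesis
    using assms by (simp add: band_coeff_def norm_divide divide_right_mono)
qed

lemma norm_band_coeff_le_inverse_sin:
  assumes t: "0 < t" "t < n"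
  shows "cmod (band_coeff n b t) \<le> 1 / (real n * sin (pi * real t / real n))"
proof -
  define w where "w = cis_frac n (- real t)"
  have "(\<Sum>i<2*b+1. cis_frac n (- (real t * (real i - real b))))
      = cis_frac n (real t * real b) * (\<Sum>i<2*b+1. w ^ i)"
    by (simp add: w_def cis_frac_power cis_frac_mult sum_distrib_left algebra_simps
        del: sum.lessThan_Suc)
  then have coeff: "cmod (band_coeff n b t) = cmod (\<Sum>i<2*b+1. w ^ i) / real n"
    by (simp add: band_coeff_def norm_divide norm_mult)
  have sin_pos: "sin (pi * real t / real n) > 0"
    using t by (intro sin_gt_zero) (auto simp: field_simps)
  have "cmod (w - 1) = 2 * \<bar>sin (- (pi * real t / real n))\<bar>"
    by (simp add: w_def cis_frac_def norm_cis_minus_1)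
  then have w1: "cmod (w - 1) = 2 * sin (pi * real t / real n)"
    using sin_pos by simp
  then have "w \<noteq> 1"
    using sin_pos by auto
  then have "cmod (\<Sum>i<2*b+1. w ^ i) \<le> 2 / cmod (w - 1)"
    by (intro norm_geometric_sum_le) (simp add: w_def)
  then have "cmod (\<Sum>i<2*b+1. w ^ i) / real n \<le> (1 / sin (pi * real t / real n)) / real n"
    unfolding w1 by (intro divide_right_mono) simp_all
  then show ?thesis
    by (simp add: coeff mult.commute del: sum.lessThan_Suc)
qed

lemma op_norm_leI:
  assumes K: "K \<ge> 0"
    and bound: "\<And>x. L2_set (\<lambda>j. cmod (\<Sum>k<n. A j k * x k)) {..<n} \<le> K * L2_set (\<lambda>k. cmod (x k)) {..<n}"
  shows "op_norm n A \<le> K"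
  unfolding op_norm_def
proof (rule cSup_least)
  show "{sqrt (\<Sum>j<n. (cmod (\<Sum>k<n. A j k * x k))\<^sup>2) | x. (\<Sum>k<n. (cmod (x k))\<^sup>2) \<le> 1} \<noteq> {}"
    by (rule ccontr) (auto dest: spec[where x="\<lambda>_. 0"])
next
  fix z
  assume "z \<in> {sqrt (\<Sum>j<n. (cmod (\<Sum>k<n. A j k * x k))\<^sup>2) | x. (\<Sum>k<n. (cmod (x k))\<^sup>2) \<le> 1}"
  then obtain x where z: "z = L2_set (\<lambda>j. cmod (\<Sum>k<n. A j k * x k)) {..<n}"
    and x: "L2_set (\<lambda>k. cmod (x k)) {..<n} \<le> 1"
    by (auto simp: L2_set_def)
  have "z \<le> K * L2_set (\<lambda>k. cmod (x k)) {..<n}"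
    using bound z by simp
  also have "\<dots> \<le> K"
    using x K by (simp add: mult_left_le)
  finally show "z \<le> K" .
qed

lemma unitary_mat_L2_isometry:
  assumes U: "unitary_mat n U"
  shows "L2_set (\<lambda>j. cmod (\<Sum>k<n. U j k * y k)) {..<n} = L2_set (\<lambda>k. cmod (y k)) {..<n}"
proof -
  have orth: "(\<Sum>j<n. cnj (U j l) * U j k) = (if l = k then 1 else 0)" if "l < n" "k < n" for l k
    using U that by (auto simp: unitary_mat_def)
  have "complex_of_real (\<Sum>j<n. (cmod (\<Sum>k<n. U j k * y k))\<^sup>2)
      = (\<Sum>j<n. (\<Sum>k<n. U j k * y k) * cnj (\<Sum>l<n. U j l * y l))"
    by (simp only: of_real_sum complex_norm_square)
  also have "\<dots> = (\<Sum>j<n. \<Sum>k<n. \<Sum>l<n. (y k * cnj (y l)) * (cnj (U j l) * U j k))"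
    by (intro sum.cong refl) (simp add: sum_product cnj_sum mult_ac)
  also have "\<dots> = (\<Sum>k<n. \<Sum>j<n. \<Sum>l<n. (y k * cnj (y l)) * (cnj (U j l) * U j k))"
    by (rule sum.swap)
  also have "\<dots> = (\<Sum>k<n. \<Sum>l<n. \<Sum>j<n. (y k * cnj (y l)) * (cnj (U j l) * U j k))"
    by (rule sum.cong[OF refl], rule sum.swap)
  also have "\<dots> = (\<Sum>k<n. \<Sum>l<n. (y k * cnj (y l)) * (if l = k then 1 else 0))"
    by (intro sum.cong refl) (simp add: orth flip: sum_distrib_left)
  also have "\<dots> = (\<Sum>k<n. y k * cnj (y k))"
    by (simp add: if_distrib cong: if_cong)
  also have "\<dots> = complex_of_real (\<Sum>k<n. (cmod (y k))\<^sup>2)"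
    by (simp only: of_real_sum complex_norm_square)
  finally show ?thesis
    unfolding L2_set_def of_real_eq_iff by simp
qed

lemma L2_set_norm_sum_le:
  fixes v :: "'b \<Rightarrow> 'a \<Rightarrow> 'c::real_normed_vector"
  assumes "finite T"
  shows "L2_set (\<lambda>j. norm (\<Sum>t\<in>T. v t j)) A \<le> (\<Sum>t\<in>T. L2_set (\<lambda>j. norm (v t j)) A)"
  using assms
proof (induction T rule: finite_induct)
  case empty
  then show ?case
    by (simp add: L2_set_def)
next
  case (insert s T)
  have "L2_set (\<lambda>j. norm (\<Sum>t\<in>insert s T. v t j)) A
      \<le> L2_set (\<lambda>j. norm (v s j) + norm (\<Sum>t\<in>T. v t j)) A"
    using insert by (intro L2_set_mono) (auto intro: norm_triangle_ineq)
  also have "\<dots> \<le> L2_set (\<lambda>j. norm (v s j)) A + L2_set (\<lambda>j. norm (\<Sum>t\<in>T. v t j)) A"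
    by (rule L2_set_triangle_ineq)
  also have "\<dots> \<le> (\<Sum>t\<in>insert s T. L2_set (\<lambda>j. norm (v t j)) A)"
    using insert by simp
  finally show ?case .
qed

text \<open>A Schur (entrywise) multiplier \<open>M = (\<Sum>t. c t \<alpha>\<^sub>t \<beta>\<^sub>t\<^sup>T)\<close> with \<open>\<bar>\<alpha>\<bar>, \<bar>\<beta>\<bar> \<le> 1\<close> acts on each
summand as \<open>diag \<alpha>\<^sub>t \<cdot> A \<cdot> diag \<beta>\<^sub>t\<close>, a contraction of \<open>A\<close>.\<close>

lemma L2_schur_product_le:
  fixes A M :: "nat \<Rightarrow> nat \<Rightarrow> complex"
  assumes "finite T"
    and A: "\<And>y. L2_set (\<lambda>j. cmod (\<Sum>k<n. A j k * y k)) {..<n} \<le> K * L2_set (\<lambda>k. cmod (y k)) {..<n}"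
    and K: "0 \<le> K"
    and M: "\<And>j k. j < n \<Longrightarrow> k < n \<Longrightarrow> M j k = (\<Sum>t\<in>T. c t * \<alpha> t j * \<beta> t k)"
    and \<alpha>: "\<And>t j. cmod (\<alpha> t j) \<le> 1"
    and \<beta>: "\<And>t k. cmod (\<beta> t k) \<le> 1"
  shows "L2_set (\<lambda>j. cmod (\<Sum>k<n. M j k * A j k * x k)) {..<n}
      \<le> (\<Sum>t\<in>T. cmod (c t)) * K * L2_set (\<lambda>k. cmod (x k)) {..<n}"
proof -
  define y where "y t k = \<beta> t k * x k" for t k
  have row: "(\<Sum>k<n. M j k * A j k * x k) = (\<Sum>t\<in>T. c t * \<alpha> t j * (\<Sum>k<n. A j k * y t k))"
    if "j < n" for j
  proof -
    have "(\<Sum>k<n. M j k * A j k * x k) = (\<Sum>k<n. \<Sum>t\<in>T. c t * \<alpha> t j * (A j k * y t k))"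
      using that by (intro sum.cong refl) (simp add: M y_def sum_distrib_left sum_distrib_right mult_ac)
    also have "\<dots> = (\<Sum>t\<in>T. c t * \<alpha> t j * (\<Sum>k<n. A j k * y t k))"
      by (subst sum.swap) (simp only: sum_distrib_left)
    finally show ?thesis .
  qed
  have summand: "L2_set (\<lambda>j. cmod (c t * \<alpha> t j * (\<Sum>k<n. A j k * y t k))) {..<n}
      \<le> cmod (c t) * K * L2_set (\<lambda>k. cmod (x k)) {..<n}" for t
  proof -
    have "L2_set (\<lambda>j. cmod (c t * \<alpha> t j * (\<Sum>k<n. A j k * y t k))) {..<n}
        \<le> L2_set (\<lambda>j. cmod (c t) * cmod (\<Sum>k<n. A j k * y t k)) {..<n}"
      using \<alpha> by (intro L2_set_mono) (auto simp: norm_mult intro!: mult_right_mono mult_right_le_one_le)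
    also have "\<dots> = cmod (c t) * L2_set (\<lambda>j. cmod (\<Sum>k<n. A j k * y t k)) {..<n}"
      by (simp add: L2_set_right_distrib)
    also have "\<dots> \<le> cmod (c t) * (K * L2_set (\<lambda>k. cmod (y t k)) {..<n})"
      by (intro mult_left_mono A) simp
    also have "\<dots> \<le> cmod (c t) * (K * L2_set (\<lambda>k. cmod (x k)) {..<n})"
      using \<beta> K by (intro mult_left_mono L2_set_mono) (auto simp: y_def norm_mult intro: mult_left_le_one_le)
    finally show ?thesis
      by (simp add: mult_ac)
  qed
  have "L2_set (\<lambda>j. cmod (\<Sum>k<n. M j k * A j k * x k)) {..<n}
      = L2_set (\<lambda>j. cmod (\<Sum>t\<in>T. c t * \<alpha> t j * (\<Sum>k<n. A j k * y t k))) {..<n}"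
    by (rule L2_set_cong) (simp_all add: row)
  also have "\<dots> \<le> (\<Sum>t\<in>T. L2_set (\<lambda>j. cmod (c t * \<alpha> t j * (\<Sum>k<n. A j k * y t k))) {..<n})"
    by (rule L2_set_norm_sum_le) fact
  also have "\<dots> \<le> (\<Sum>t\<in>T. cmod (c t)) * K * L2_set (\<lambda>k. cmod (x k)) {..<n}"
    unfolding sum_distrib_right by (intro sum_mono summand)
  finally show ?thesis .
qed

lemma op_norm_schur_product_le:
  fixes A M :: "nat \<Rightarrow> nat \<Rightarrow> complex"
  assumes "finite T"
    and "\<And>y. L2_set (\<lambda>j. cmod (\<Sum>k<n. A j k * y k)) {..<n} \<le> K * L2_set (\<lambda>k. cmod (y k)) {..<n}"
    and "0 \<le> K"
    and "\<And>j k. j < n \<Longrightarrow> k < n \<Longrightarrow> M j k = (\<Sum>t\<in>T. c t * \<alpha> t j * \<beta> t k)"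
    and "\<And>t j. cmod (\<alpha> t j) \<le> 1"
    and "\<And>t k. cmod (\<beta> t k) \<le> 1"
  shows "op_norm n (\<lambda>j k. M j k * A j k) \<le> (\<Sum>t\<in>T. cmod (c t)) * K"
  using assms by (intro op_norm_leI L2_schur_product_le) (auto intro!: sum_nonneg mult_nonneg_nonneg)

lemma sum_inverse_le_ln:
  assumes "T \<le> N" "1 \<le> T"
  shows "(\<Sum>t\<in>{T<..N}. 1 / real t) \<le> ln (real N) - ln (real T)"
  using assms
proof (induction N rule: dec_induct)
  case base
  then show ?case
    by simp
next
  case (step N)
  have N: "real N > 0"
    using step by simp
  have "ln (real N / real (Suc N)) \<le> real N / real (Suc N) - 1"
    using N by (intro ln_le_minus_one) simp
  also have "\<dots> = - (1 / real (Suc N))"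
    by (simp add: field_simps)
  finally have "1 / real (Suc N) \<le> ln (real (Suc N)) - ln (real N)"
    using N by (simp add: ln_div)
  moreover have "{T<..Suc N} = insert (Suc N) {T<..N}"
    using step by auto
  ultimately show ?case
    using step by simp
qed

lemma sum_min_inverse_le:
  assumes w: "1 < w" "w \<le> n"
  shows "(\<Sum>t\<in>{1..<n}. min (real w / real n) (1 / real t)) \<le> 1 + ln (2 * real w)"
proof -
  define T where "T = n div w"
  have T: "1 \<le> T" "T * w \<le> n"
    using w by (simp_all add: T_def Suc_le_eq div_greater_zero_iff div_times_less_eq_dividend)
  have "n = T * w + n mod w"
    by (simp add: T_def)
  moreover have "n mod w < w" "w \<le> T * w"
    using w T by auto
  ultimately have "n < 2 * (T * w)"
    by linarith
  then have n_less: "real n < 2 * (real T * real w)"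
    by (metis of_nat_less_iff of_nat_mult of_nat_numeral)
  have "T < T * w"
    using w T by simp
  with T have "T < n"
    by linarith
  then have split: "{1..<n} = {1..T} \<union> {T<..n-1}"
    by auto
  have "(\<Sum>t\<in>{1..<n}. min (real w / real n) (1 / real t))
      = (\<Sum>t\<in>{1..T}. min (real w / real n) (1 / real t)) + (\<Sum>t\<in>{T<..n-1}. min (real w / real n) (1 / real t))"
    unfolding split by (rule sum.union_disjoint) auto
  also have "\<dots> \<le> (\<Sum>t\<in>{1..T}. real w / real n) + (\<Sum>t\<in>{T<..n-1}. 1 / real t)"
    by (intro add_mono sum_mono) auto
  also have "(\<Sum>t\<in>{1..T}. real w / real n) \<le> 1"
  proof -
    have "real T * real w \<le> real n"
      using T by (metis of_nat_le_iff of_nat_mult)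
    then show ?thesis
      using w by (simp add: field_simps)
  qed
  also have "(\<Sum>t\<in>{T<..n-1}. 1 / real t) \<le> ln (real (n-1)) - ln (real T)"
    using \<open>T < n\<close> T by (intro sum_inverse_le_ln) auto
  also have "\<dots> \<le> ln (real n) - ln (real T)"
    using \<open>T < n\<close> T by simp
  also have "\<dots> \<le> ln (2 * real w)"
  proof -
    have "ln (real n) \<le> ln (2 * (real T * real w))"
      using n_less T w by simp
    then show ?thesis
      using T w by (simp add: ln_mult mult_ac)
  qed
  finally show ?thesis
    by simp
qed

lemma norm_band_coeff_le_min:
  assumes t: "0 < t" "t < n"
  shows "cmod (band_coeff n b t)
    \<le> min ((2 * real b + 1) / real n) (1 / real t) + min ((2 * real b + 1) / real n) (1 / real (n - t))"
proof -
  have min_le: "x \<le> min a p + min a q" if "x \<le> a" "x \<le> p + q" "0 \<le> a" "0 \<le> p" "0 \<le> q" for x a p q :: real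
    using that by (auto simp: min_def)
  show ?thesis
  proof (rule min_le)
    show "cmod (band_coeff n b t) \<le> (2 * real b + 1) / real n"
      using t by (intro norm_band_coeff_le_width) simp
    show "cmod (band_coeff n b t) \<le> 1 / real t + 1 / real (n - t)"
      using norm_band_coeff_le_inverse_sin[OF t, where b=b] inverse_sin_pi_frac_le[OF t] by (rule order.trans)
  qed simp_all
qed

lemma sum_norm_band_coeff_le:
  assumes b: "0 < b" and n: "2 * b < n"
  shows "(\<Sum>t<n. cmod (band_coeff n b t)) \<le> 2 * ln (real b) + 13"
proof -
  define A where "A = (2 * real b + 1) / real n"
  have A: "A \<le> 1"
    using n by (simp add: A_def)
  have "{..<n} = insert 0 {1..<n}"
    using n by auto
  then have "(\<Sum>t<n. cmod (band_coeff n b t)) = cmod (band_coeff n b 0) + (\<Sum>t\<in>{1..<n}. cmod (band_coeff n b t))"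
    by simp
  also have "\<dots> \<le> A + (\<Sum>t\<in>{1..<n}. min A (1 / real t) + min A (1 / real (n - t)))"
    unfolding A_def using n by (intro add_mono sum_mono norm_band_coeff_le_width norm_band_coeff_le_min) auto
  also have "(\<Sum>t\<in>{1..<n}. min A (1 / real t) + min A (1 / real (n - t)))
      = (\<Sum>t\<in>{1..<n}. min A (1 / real t)) + (\<Sum>t\<in>{1..<n}. min A (1 / real (n - t)))"
    by (rule sum.distrib)
  also have "(\<Sum>t\<in>{1..<n}. min A (1 / real (n - t))) = (\<Sum>t\<in>{1..<n}. min A (1 / real t))"
    by (rule sum.reindex_bij_witness[of _ "\<lambda>t. n - t" "\<lambda>t. n - t"]) auto
  also have "(\<Sum>t\<in>{1..<n}. min A (1 / real t)) \<le> 1 + ln (2 * real (2 * b + 1))"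
    using b n sum_min_inverse_le[of "2 * b + 1" n] by (simp add: A_def add.commute)
  also have "ln (2 * real (2 * b + 1)) \<le> ln (6 * real b)"
    using b by simp
  also have "\<dots> = ln 6 + ln (real b)"
    using b by (simp add: ln_mult)
  finally have "(\<Sum>t<n. cmod (band_coeff n b t)) \<le> A + 2 * (1 + (ln 6 + ln (real b)))"
    by simp
  moreover have "ln (6::real) \<le> 5"
    using ln_le_minus_one[of 6] by simp
  ultimately show ?thesis
    using A by simp
qed

theorem lemma4p2:
  shows "\<exists>C1 C2 :: real. C1 > 0 \<and> C2 > 0 \<and>
     (\<forall>(n::nat) (b::nat) (U :: nat \<Rightarrow> nat \<Rightarrow> complex).
        unitary_mat n U \<longrightarrow> 0 < b \<longrightarrow> 2 * b < n \<longrightarrow>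
        op_norm n (band n b U) \<le> C1 * ln (real b) + C2)"
proof -
  have "op_norm n (band n b U) \<le> 2 * ln (real b) + 13"
    if U: "unitary_mat n U" and b: "0 < b" and n: "2 * b < n" for n b :: nat and U
  proof -
    let ?M = "\<lambda>j k. if \<bar>int j - int k\<bar> \<le> int b \<or> int n - \<bar>int j - int k\<bar> \<le> int b then 1 else 0"
    have band_eq: "band n b U = (\<lambda>j k. ?M j k * U j k)"
      by (simp add: band_def fun_eq_iff)
    have "op_norm n (band n b U) \<le> (\<Sum>t<n. cmod (band_coeff n b t)) * 1"
      unfolding band_eq using n
      by (intro op_norm_schur_product_le[where \<alpha>="\<lambda>t j. cis_frac n (real t * real j)"
            and \<beta>="\<lambda>t k. cis_frac n (- (real t * real k))"])
        (simp_all add: unitary_mat_L2_isometry[OF U] band_indicator_expansion)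
    also have "\<dots> \<le> 2 * ln (real b) + 13"
      using sum_norm_band_coeff_le[OF b n] by simp
    finally show ?thesis .
  qed
  then show ?thesis
    by (intro exI[of _ 2] exI[of _ 13]) auto
qed

end
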